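(* In the setting described in the context, let $\gamma\in 2\Delta^+$. If $S_\gamma>0$, then either the number of ordered pairs $(\alpha,\beta)\in\Delta^+\times\Delta^+$ with $\alpha+\beta=\gamma$ is greater than two, or there exist $\alpha,\beta\in\Delta^+$ with $\alpha+\beta=\gamma$ and $\langle\alpha,\beta\rangle<0$.
   Context: Let $K$ be a compact Lie group with Lie algebra $\mathfrak k$, and $V$ a complex irreducible representation of $K$ (an irreducible orthogonal representation with an invariant complex structure) with $K$-invariant Hermitian product; $\mathfrak g=\mathfrak k^{\mathbb C}$ acts on $V$. Fix a maximal torus with complexified Lie algebra $\mathfrak h$, roots $\Delta$, positive roots $\Delta^+$; $\langle\cdot,\cdot\rangle$ also denotes the Cartan–Killing form on $\mathfrak h^*$. Choose $f_\alpha\in\mathfrak g_{-\alpha}$, $e_\alpha\in\mathfrak g_\alpha$ ($\alpha\in\Delta^+$) with $[e_\alpha,f_\alpha]=h_\alpha$, $\langle h_\alpha,h\rangle=2\alpha(h)/\|\alpha\|^2$ for $h\in\mathfrak h$, and $e_\alpha-f_\alpha$, $i(e_\alpha+f_\alpha)$, $ih_\alpha$ spanning the semisimple part of $\mathfrak k$. Let $p$ be a unit highest weight vector of $V$, and let $f=\sum_{\alpha\in\Delta^+}z_\alpha f_\alpha$ ($z_\alpha\in\mathbb C$) with $\|fp\|=1$. Put $r_\alpha=|z_\alpha|\,\|f_\alpha p\|$. For $\alpha,\beta\in\Delta^+$ let $m_{\alpha,\beta}=\sqrt2$ if $\alpha=\beta$ or $\langle\alpha,\beta\rangle<0$, and $m_{\alpha,\beta}=1$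 otherwise. Let $2\Delta^+=\{\alpha+\beta:\alpha,\beta\in\Delta^+\}$, and for $\gamma\in2\Delta^+$ set \[S_\gamma=\Big(\sum_{\alpha+\beta=\gamma}m_{\alpha,\beta}r_\alpha r_\beta\Big)^2-2\sum_{\alpha+\beta=\gamma}r_\alpha^2r_\beta^2,\] where both sums run over ordered pairs $(\alpha,\beta)\in\Delta^+\times\Delta^+$ with $\alpha+\beta=\gamma$. *)

theory Defs
  imports "HOL-Analysis.Analysis"
begin

text \<open>Abstract root data. The real span of the roots in h* carries the (positive definite)
  Cartan--Killing form; we model it as a Euclidean space with its inner product.\<close>

definition root_system :: "'a::euclidean_space set \<Rightarrow> bool" where
  "root_system R \<longleftrightarrow> finite R \<and> 0 \<notin> R
     \<and> (\<forall>\<alpha>\<in>R. \<forall>\<beta>\<in>R. \<beta> - (2 * (\<beta> \<bullet> \<alpha>) / (\<alpha> \<bullet> \<alpha>)) *\<^sub>R \<alpha> \<in> R)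
     \<and> (\<forall>\<alpha>\<in>R. \<forall>\<beta>\<in>R. 2 * (\<beta> \<bullet> \<alpha>) / (\<alpha> \<bullet> \<alpha>) \<in> \<int>)
     \<and> (\<forall>\<alpha>\<in>R. \<forall>c. c *\<^sub>R \<alpha> \<in> R \<longrightarrow> c = 1 \<or> c = -1)"

definition positive_system :: "'a::euclidean_space set \<Rightarrow> 'a set \<Rightarrow> bool" where
  "positive_system R P \<longleftrightarrow> (\<exists>v. (\<forall>\<alpha>\<in>R. v \<bullet> \<alpha> \<noteq> 0) \<and> P = {\<alpha>\<in>R. v \<bullet> \<alpha> > 0})"

definition two_Delta :: "'a::euclidean_space set \<Rightarrow> 'a set" where
  "two_Delta P = {\<alpha> + \<beta> | \<alpha> \<beta>. \<alpha> \<in> P \<and> \<beta> \<in> P}"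

definition root_pairs :: "'a::euclidean_space set \<Rightarrow> 'a \<Rightarrow> ('a \<times> 'a) set" where
  "root_pairs P \<gamma> = {(\<alpha>, \<beta>). \<alpha> \<in> P \<and> \<beta> \<in> P \<and> \<alpha> + \<beta> = \<gamma>}"

definition mcoef :: "'a::euclidean_space \<Rightarrow> 'a \<Rightarrow> real" where
  "mcoef \<alpha> \<beta> = (if \<alpha> = \<beta> \<or> \<alpha> \<bullet> \<beta> < 0 then sqrt 2 else 1)"

definition S_gamma :: "'a::euclidean_space set \<Rightarrow> ('a \<Rightarrow> real) \<Rightarrow> 'a \<Rightarrow> real" where
  "S_gamma P r \<gamma> =
     (\<Sum>(\<alpha>, \<beta>)\<in>root_pairs P \<gamma>. mcoef \<alpha> \<beta> * r \<alpha> * r \<beta>)\<^sup>2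
     - 2 * (\<Sum>(\<alpha>, \<beta>)\<in>root_pairs P \<gamma>. (r \<alpha>)\<^sup>2 * (r \<beta>)\<^sup>2)"

end

theory Submission
  imports Defs
begin

text \<open>The set of ordered pairs summing to \<open>\<gamma>\<close> is invariant under swapping, and it contains
  at most one diagonal pair \<open>(\<alpha>, \<alpha>)\<close>, since \<open>2\<alpha> = \<gamma>\<close> determines \<open>\<alpha>\<close>. So if it has at most
  two elements it is \<open>{(\<alpha>, \<beta>), (\<beta>, \<alpha>)}\<close> for a single pair. If moreover
  \<open>\<langle>\<alpha>, \<beta>\<rangle> \<ge> 0\<close>, then \<open>S\<^sub>\<gamma>\<close> vanishes: for \<open>\<alpha> = \<beta>\<close> it is \<open>(\<surd>2 r\<^sub>\<alpha>\<^sup>2)\<^sup>2 - 2 r\<^sub>\<alpha>\<^sup>4\<close>,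
  and for \<open>\<alpha> \<noteq> \<beta>\<close> it is \<open>(2 r\<^sub>\<alpha> r\<^sub>\<beta>)\<^sup>2 - 4 r\<^sub>\<alpha>\<^sup>2 r\<^sub>\<beta>\<^sup>2\<close>.\<close>

lemma finite_root_pairs: "finite P \<Longrightarrow> finite (root_pairs P \<gamma>)"
  unfolding root_pairs_def by (rule finite_subset[of _ "P \<times> P"]) auto

lemma root_pairs_swap: "(\<alpha>, \<beta>) \<in> root_pairs P \<gamma> \<Longrightarrow> (\<beta>, \<alpha>) \<in> root_pairs P \<gamma>"
  unfolding root_pairs_def by (auto simp: add.commute)

lemma root_pairs_diagonal_unique:
  assumes "(\<alpha>, \<alpha>) \<in> root_pairs P \<gamma>" and "(\<beta>, \<beta>) \<in> root_pairs P \<gamma>"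
  shows "\<alpha> = \<beta>"
proof -
  have "(2::real) *\<^sub>R \<alpha> = 2 *\<^sub>R \<beta>"
    using assms unfolding root_pairs_def by (simp add: scaleR_2)
  then show ?thesis by simp
qed

lemma root_pairs_eq_swap_pair:
  assumes "finite P" and "card (root_pairs P \<gamma>) \<le> 2" and ab: "(\<alpha>, \<beta>) \<in> root_pairs P \<gamma>"
  shows "root_pairs P \<gamma> = {(\<alpha>, \<beta>), (\<beta>, \<alpha>)}"
proof (intro equalityI subsetI)
  fix p assume p: "p \<in> root_pairs P \<gamma>"
  obtain \<gamma>' \<delta> where p_eq: "p = (\<gamma>', \<delta>)" by (cases p)
  have no_three: False
    if "x \<in> root_pairs P \<gamma>" "y \<in> root_pairs P \<gamma>" "z \<in> root_pairs P \<gamma>"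
       "x \<noteq> y" "x \<noteq> z" "y \<noteq> z" for x y z
  proof -
    have "card {x, y, z} \<le> card (root_pairs P \<gamma>)"
      using that finite_root_pairs[OF \<open>finite P\<close>] by (intro card_mono) auto
    with that assms(2) show False by simp
  qed
  show "p \<in> {(\<alpha>, \<beta>), (\<beta>, \<alpha>)}"
  proof (cases "\<alpha> = \<beta> \<and> \<gamma>' = \<delta>")
    case True
    then show ?thesis using root_pairs_diagonal_unique[of \<alpha> P \<gamma> \<gamma>'] ab p p_eq by auto
  next
    case False
    then show ?thesis
      using no_three[of "(\<alpha>, \<beta>)" "(\<beta>, \<alpha>)" p] no_three[of "(\<alpha>, \<alpha>)" p "(\<delta>, \<gamma>')"]
        ab p p_eq root_pairs_swap by fastforce
  qed
qed (use ab root_pairs_swap in auto)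

lemma S_gamma_swap_pair_eq_0:
  assumes pairs: "root_pairs P \<gamma> = {(\<alpha>, \<beta>), (\<beta>, \<alpha>)}" and "\<not> \<alpha> \<bullet> \<beta> < 0"
  shows "S_gamma P r \<gamma> = 0"
proof (cases "\<alpha> = \<beta>")
  case True
  have "(sqrt 2 * r \<alpha> * r \<alpha>)\<^sup>2 = 2 * ((r \<alpha>)\<^sup>2 * (r \<alpha>)\<^sup>2)"
    by (simp add: power_mult_distrib power2_eq_square)
  then show ?thesis
    unfolding S_gamma_def pairs using True by (simp add: mcoef_def)
next
  case False
  with assms(2) have "mcoef \<alpha> \<beta> = 1" "mcoef \<beta> \<alpha> = 1"
    by (auto simp: mcoef_def inner_commute)
  then show ?thesis
    unfolding S_gamma_def pairs using False by (simp add: power2_eq_square algebra_simps)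
qed

theorem mainTheorem6:
  fixes R P :: "'a::euclidean_space set" and r :: "'a \<Rightarrow> real" and \<gamma> :: 'a
  assumes "root_system R" and "positive_system R P"
    and "\<forall>\<alpha>\<in>P. r \<alpha> \<ge> 0"
    and "\<gamma> \<in> two_Delta P"
    and "S_gamma P r \<gamma> > 0"
  shows "card (root_pairs P \<gamma>) > 2 \<or> (\<exists>\<alpha>\<in>P. \<exists>\<beta>\<in>P. \<alpha> + \<beta> = \<gamma> \<and> \<alpha> \<bullet> \<beta> < 0)"
proof (rule ccontr)
  assume "\<not> ?thesis"
  then have card_le: "card (root_pairs P \<gamma>) \<le> 2"
    and no_obtuse: "\<And>\<alpha> \<beta>. (\<alpha>, \<beta>) \<in> root_pairs P \<gamma> \<Longrightarrow> \<not> \<alpha> \<bullet> \<beta> < 0"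
    unfolding root_pairs_def by auto
  have "finite P"
    using assms(1,2) unfolding root_system_def positive_system_def by auto
  obtain \<alpha> \<beta> where ab: "(\<alpha>, \<beta>) \<in> root_pairs P \<gamma>"
    using assms(4) unfolding two_Delta_def root_pairs_def by auto
  have "S_gamma P r \<gamma> = 0"
    using root_pairs_eq_swap_pair[OF \<open>finite P\<close> card_le ab] no_obtuse[OF ab]
    by (rule S_gamma_swap_pair_eq_0)
  with assms(5) show False by simp
qed

end
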